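(* Let $G$ be a cycle graph with $L\ge2$ edges and root $O$, and let all edges have activation probability $p\in(0,1]$. Then the value of the stochastic search game is $$\mathrm{val}(p)=\frac{1}{1-(1-p)^2}+\frac{L-1}{2p}.$$ Moreover, the uniform distribution on the edges (for the hider) and the uniform Eulerian strategy (for the searcher) are optimal.
   Context: Setting: the stochastic search game. Every edge has length $1$ and is active at each stage independently with probability $p$. The hider chooses an edge and stays there. The searcher starts at $O$; at each stage, knowing which edges are currently active, she waits or traverses an active edge incident to her position. The hider's payoff is the expected first time the searcher traverses his edge. Uniform Eulerian strategy on the cycle: at $O$, wait until at least one of the two incident edges is active, and take one chosen uniformly among the active ones. Then go around the cycle in that direction, waiting whenever the next edge is inactive. *)

theory Defs
  imports "HOL-Probability.Probability"
begin

(* Cycle graph with L edges: vertices 0..L-1, root O = vertex 0,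
   edge e (e < L) joins vertex e and vertex (e+1) mod L. *)

type_synonym active = "nat \<Rightarrow> bool"
type_synonym action = "nat option"               (* None = wait, Some e = traverse edge e *)
type_synonym history = "(active \<times> action) list"  (* past stages: active set seen, action taken *)
type_synonym strat = "history \<Rightarrow> active \<Rightarrow> action pmf"

definition move :: "nat \<Rightarrow> nat \<Rightarrow> action \<Rightarrow> nat" where
  "move L v a = (case a of None \<Rightarrow> v | Some e \<Rightarrow> (if v = e then (e + 1) mod L else e))"

definition pos :: "nat \<Rightarrow> history \<Rightarrow> nat" where
  "pos L h = foldl (\<lambda>v x. move L v (snd x)) 0 h"

definition legal :: "nat \<Rightarrow> nat \<Rightarrow> active \<Rightarrow> action \<Rightarrow> bool" where
  "legal L v A a = (case a of None \<Rightarrow> True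
      | Some e \<Rightarrow> e < L \<and> A e \<and> (v = e \<or> v = (e + 1) mod L))"

definition legal_hist :: "nat \<Rightarrow> history \<Rightarrow> bool" where
  "legal_hist L h = (\<forall>i < length h. legal L (pos L (take i h)) (fst (h ! i)) (snd (h ! i)))"

definition searcher_strategy :: "nat \<Rightarrow> strat \<Rightarrow> bool" where
  "searcher_strategy L \<sigma> =
     (\<forall>h A. legal_hist L h \<longrightarrow> (\<forall>a \<in> set_pmf (\<sigma> h A). legal L (pos L h) A a))"

definition hider_strategy :: "nat \<Rightarrow> nat pmf \<Rightarrow> bool" where
  "hider_strategy L q = (set_pmf q \<subseteq> {..<L})"

definition active_pmf :: "real \<Rightarrow> nat \<Rightarrow> active pmf" where
  "active_pmf p L = Pi_pmf {..<L} False (\<lambda>_. bernoulli_pmf p)"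

primrec hist :: "real \<Rightarrow> nat \<Rightarrow> strat \<Rightarrow> nat \<Rightarrow> history pmf" where
  "hist p L \<sigma> 0 = return_pmf []"
| "hist p L \<sigma> (Suc t) = bind_pmf (hist p L \<sigma> t) (\<lambda>h.
       bind_pmf (active_pmf p L) (\<lambda>A. map_pmf (\<lambda>a. h @ [(A, a)]) (\<sigma> h A)))"

definition found :: "nat \<Rightarrow> history \<Rightarrow> bool" where
  "found e h = (\<exists>x \<in> set h. snd x = Some e)"

(* expected first time (stage index) the searcher traverses edge e:
   E[T] = sum_{t>=0} P(T > t) *)
definition search_time :: "real \<Rightarrow> nat \<Rightarrow> strat \<Rightarrow> nat \<Rightarrow> ennreal" where
  "search_time p L \<sigma> e = (\<Sum>t. ennreal (measure_pmf.prob (hist p L \<sigma> t) {h. \<not> found e h}))"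

definition payoff :: "real \<Rightarrow> nat \<Rightarrow> strat \<Rightarrow> nat pmf \<Rightarrow> ennreal" where
  "payoff p L \<sigma> q = (\<integral>\<^sup>+ e. search_time p L \<sigma> e \<partial>measure_pmf q)"

definition lower_value :: "real \<Rightarrow> nat \<Rightarrow> ennreal" where
  "lower_value p L = (\<Squnion>q \<in> {q. hider_strategy L q}. \<Sqinter>\<sigma> \<in> {\<sigma>. searcher_strategy L \<sigma>}. payoff p L \<sigma> q)"

definition upper_value :: "real \<Rightarrow> nat \<Rightarrow> ennreal" where
  "upper_value p L = (\<Sqinter>\<sigma> \<in> {\<sigma>. searcher_strategy L \<sigma>}. \<Squnion>q \<in> {q. hider_strategy L q}. payoff p L \<sigma> q)"

definition first_move :: "history \<Rightarrow> nat option" where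
  "first_move h = (case filter (\<lambda>x. snd x \<noteq> None) h of [] \<Rightarrow> None | x # _ \<Rightarrow> snd x)"

definition euler :: "nat \<Rightarrow> strat" where
  "euler L h A = (case first_move h of
       None \<Rightarrow> (let S = {e. e \<in> {0, L - 1} \<and> A e} in
                 if S = {} then return_pmf None else map_pmf Some (pmf_of_set S))
     | Some e0 \<Rightarrow> (let v = pos L h;
                      e = (if e0 = 0 then v else (v + L - 1) mod L) in
                  if A e then return_pmf (Some e) else return_pmf None))"

end

theory Submission
  imports Defs
begin

text \<open>
  Both bounds are potential arguments on the history process.
  Against the uniform hider, the expected remaining search cost when \<open>k\<close> edges have been
  traversed is at least \<open>\<Phi>(k)\<close> with \<open>\<Phi>(0) = val(p)\<close> and
  \<open>\<Phi>(k) = (L - k)(L - k + 1) / (2 L p)\<close> for \<open>k \<ge> 1\<close>: at the root a new edge is reached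
  with probability at most \<open>1 - (1 - p)\<^sup>2\<close>, and afterwards with probability at most \<open>p\<close>,
  because the searcher stands at an endpoint of an edge she has just traversed, so at most one
  incident edge is new.
  Against the uniform Eulerian strategy, the expected remaining time until a fixed edge is
  traversed is \<open>val(p)\<close> at the root and \<open>d / p\<close> once the tour has started and \<open>d\<close> edges,
  including the hider's, remain before it; \<open>val(p)\<close> is the fixed point of the one-stage
  equation at the root.
\<close>

subsection \<open>Potential arguments on the history process\<close>

lemma suminf_le_of_decrease:
  fixes a b :: "nat \<Rightarrow> ennreal"
  assumes step: "\<And>t. b t + a (Suc t) \<le> a t"
  shows "(\<Sum>t. b t) \<le> a 0"
proof (rule suminf_le_const)
  show "summable b" by (rule summableI)
  have partial: "(\<Sum>t<n. b t) + a n \<le> a 0" for n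
  proof (induction n)
    case (Suc n)
    have "(\<Sum>t<Suc n. b t) + a (Suc n) = (\<Sum>t<n. b t) + (b n + a (Suc n))"
      by (simp add: add.assoc)
    also have "\<dots> \<le> (\<Sum>t<n. b t) + a n" by (intro add_left_mono step)
    finally show ?case using Suc.IH by (rule order_trans)
  qed simp
  show "(\<Sum>t<n. b t) \<le> a 0" for n by (rule order_trans[OF _ partial[of n]]) simp
qed

lemma le_suminf_of_dominated_decrease:
  fixes a b :: "nat \<Rightarrow> ennreal"
  assumes step: "\<And>t. a t \<le> b t + a (Suc t)" and dom: "\<And>t. a t \<le> M * b t" and "M < \<top>"
  shows "a 0 \<le> (\<Sum>t. b t)"
proof (cases "(\<Sum>t. b t) = \<top>")
  case False
  have partial: "a 0 \<le> (\<Sum>t<n. b t) + M * b n" for n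
  proof -
    have "a 0 \<le> (\<Sum>t<n. b t) + a n"
    proof (induction n)
      case (Suc n)
      also have "(\<Sum>t<n. b t) + a n \<le> (\<Sum>t<n. b t) + (b n + a (Suc n))"
        by (intro add_left_mono step)
      finally show ?case by (simp add: add.assoc)
    qed simp
    also have "\<dots> \<le> (\<Sum>t<n. b t) + M * b n" by (intro add_left_mono dom)
    finally show ?thesis .
  qed
  \<comment> \<open>the remainder \<open>a n \<le> M * b n\<close> vanishes because the series converges\<close>
  define r where "r t = enn2real (b t)" for t
  have b_r: "b t = ennreal (r t)" for t
    using False ennreal_suminf_lessD[of b \<top> t]
    by (simp add: r_def ennreal_enn2real_if top.not_eq_extremum)
  have "summable r"
  proof (rule summable_suminf_not_top)
    show "0 \<le> r t" for t by (simp add: r_def)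
    show "(\<Sum>t. ennreal (r t)) \<noteq> \<top>" unfolding b_r[symmetric] using False .
  qed
  then have "b \<longlonglongrightarrow> 0"
    unfolding b_r by (metis summable_LIMSEQ_zero ennreal_0 tendsto_ennrealI)
  then have "(\<lambda>n. (\<Sum>t<n. b t) + M * b n) \<longlonglongrightarrow> (\<Sum>t. b t) + M * 0"
    by (intro tendsto_add summable_LIMSEQ summableI ennreal_tendsto_cmult \<open>M < \<top>\<close>)
  then show ?thesis using partial by (simp add: LIMSEQ_le_const)
qed simp

abbreviation next_hist :: "real \<Rightarrow> nat \<Rightarrow> strat \<Rightarrow> history \<Rightarrow> history pmf" where
  "next_hist p L \<sigma> h \<equiv> bind_pmf (active_pmf p L) (\<lambda>A. map_pmf (\<lambda>a. h @ [(A, a)]) (\<sigma> h A))"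

lemma hist_invariant:
  assumes "I []" and "\<And>h A a. I h \<Longrightarrow> a \<in> set_pmf (\<sigma> h A) \<Longrightarrow> I (h @ [(A, a)])"
    and "h \<in> set_pmf (hist p L \<sigma> t)"
  shows "I h"
  using assms(3) by (induction t arbitrary: h) (use assms(1,2) in auto)

lemma nn_integral_hist_Suc:
  "(\<integral>\<^sup>+h. f h \<partial>hist p L \<sigma> (Suc t))
     = (\<integral>\<^sup>+h. (\<integral>\<^sup>+h'. f h' \<partial>next_hist p L \<sigma> h) \<partial>hist p L \<sigma> t)"
  by (simp only: hist.simps nn_integral_bind_pmf)

lemma suminf_hist_le_potential:
  fixes f u :: "history \<Rightarrow> ennreal"
  assumes "I []" and "\<And>h A a. I h \<Longrightarrow> a \<in> set_pmf (\<sigma> h A) \<Longrightarrow> I (h @ [(A, a)])"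
    and step: "\<And>h. I h \<Longrightarrow> u h + (\<integral>\<^sup>+h'. f h' \<partial>next_hist p L \<sigma> h) \<le> f h"
  shows "(\<Sum>t. \<integral>\<^sup>+h. u h \<partial>hist p L \<sigma> t) \<le> f []"
proof -
  have inv: "h \<in> set_pmf (hist p L \<sigma> t) \<Longrightarrow> I h" for h t
    by (rule hist_invariant[where I = I, OF assms(1,2)])
  have decrease: "(\<integral>\<^sup>+h. u h \<partial>hist p L \<sigma> t) + (\<integral>\<^sup>+h. f h \<partial>hist p L \<sigma> (Suc t))
      \<le> (\<integral>\<^sup>+h. f h \<partial>hist p L \<sigma> t)" for t
  proof -
    have "(\<integral>\<^sup>+h. u h \<partial>hist p L \<sigma> t) + (\<integral>\<^sup>+h. f h \<partial>hist p L \<sigma> (Suc t))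
        = (\<integral>\<^sup>+h. u h + (\<integral>\<^sup>+h'. f h' \<partial>next_hist p L \<sigma> h) \<partial>hist p L \<sigma> t)"
      by (simp add: nn_integral_hist_Suc nn_integral_add)
    also have "\<dots> \<le> (\<integral>\<^sup>+h. f h \<partial>hist p L \<sigma> t)"
      using inv by (intro nn_integral_mono_AE) (simp only: AE_measure_pmf_iff, blast intro: step)
    finally show ?thesis .
  qed
  show ?thesis
    using suminf_le_of_decrease[where a = "\<lambda>t. \<integral>\<^sup>+h. f h \<partial>hist p L \<sigma> t"
        and b = "\<lambda>t. \<integral>\<^sup>+h. u h \<partial>hist p L \<sigma> t", OF decrease] by simp
qed

lemma potential_le_suminf_hist:
  fixes f u :: "history \<Rightarrow> ennreal"
  assumes "I []" and "\<And>h A a. I h \<Longrightarrow> a \<in> set_pmf (\<sigma> h A) \<Longrightarrow> I (h @ [(A, a)])"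
    and step: "\<And>h. I h \<Longrightarrow> f h \<le> u h + (\<integral>\<^sup>+h'. f h' \<partial>next_hist p L \<sigma> h)"
    and dom: "\<And>h. I h \<Longrightarrow> f h \<le> M * u h" and "M < \<top>"
  shows "f [] \<le> (\<Sum>t. \<integral>\<^sup>+h. u h \<partial>hist p L \<sigma> t)"
proof -
  have inv: "h \<in> set_pmf (hist p L \<sigma> t) \<Longrightarrow> I h" for h t
    by (rule hist_invariant[where I = I, OF assms(1,2)])
  have decrease: "(\<integral>\<^sup>+h. f h \<partial>hist p L \<sigma> t)
      \<le> (\<integral>\<^sup>+h. u h \<partial>hist p L \<sigma> t) + (\<integral>\<^sup>+h. f h \<partial>hist p L \<sigma> (Suc t))" for t
  proof -
    have "(\<integral>\<^sup>+h. f h \<partial>hist p L \<sigma> t)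
        \<le> (\<integral>\<^sup>+h. u h + (\<integral>\<^sup>+h'. f h' \<partial>next_hist p L \<sigma> h) \<partial>hist p L \<sigma> t)"
      using inv by (intro nn_integral_mono_AE) (simp only: AE_measure_pmf_iff, blast intro: step)
    also have "\<dots> = (\<integral>\<^sup>+h. u h \<partial>hist p L \<sigma> t) + (\<integral>\<^sup>+h. f h \<partial>hist p L \<sigma> (Suc t))"
      by (simp add: nn_integral_hist_Suc nn_integral_add)
    finally show ?thesis .
  qed
  have dominated: "(\<integral>\<^sup>+h. f h \<partial>hist p L \<sigma> t) \<le> M * (\<integral>\<^sup>+h. u h \<partial>hist p L \<sigma> t)" for t
  proof -
    have "(\<integral>\<^sup>+h. f h \<partial>hist p L \<sigma> t) \<le> (\<integral>\<^sup>+h. M * u h \<partial>hist p L \<sigma> t)"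
      using inv by (intro nn_integral_mono_AE) (auto simp: AE_measure_pmf_iff intro: dom)
    then show ?thesis by (simp add: nn_integral_cmult)
  qed
  show ?thesis
    using le_suminf_of_dominated_decrease[where a = "\<lambda>t. \<integral>\<^sup>+h. f h \<partial>hist p L \<sigma> t"
        and b = "\<lambda>t. \<integral>\<^sup>+h. u h \<partial>hist p L \<sigma> t", OF decrease dominated \<open>M < \<top>\<close>]
    by simp
qed

lemma nn_integral_next_hist_lower:
  fixes f :: "history \<Rightarrow> ennreal"
  assumes "\<And>A a. a \<in> set_pmf (\<sigma> h A) \<Longrightarrow> c \<le> f (h @ [(A, a)]) + D * indicator B A"
  shows "c \<le> (\<integral>\<^sup>+h'. f h' \<partial>next_hist p L \<sigma> h) + D * emeasure (active_pmf p L) B"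
proof -
  have "c = (\<integral>\<^sup>+A. \<integral>\<^sup>+a. c \<partial>\<sigma> h A \<partial>active_pmf p L)" by simp
  also have "\<dots> \<le> (\<integral>\<^sup>+A. \<integral>\<^sup>+a. f (h @ [(A, a)]) + D * indicator B A \<partial>\<sigma> h A \<partial>active_pmf p L)"
    using assms by (intro nn_integral_mono nn_integral_mono_AE) (simp add: AE_measure_pmf_iff)
  also have "\<dots> = (\<integral>\<^sup>+A. (\<integral>\<^sup>+a. f (h @ [(A, a)]) \<partial>\<sigma> h A) + D * indicator B A \<partial>active_pmf p L)"
    by (simp add: nn_integral_add)
  also have "\<dots> = (\<integral>\<^sup>+h'. f h' \<partial>next_hist p L \<sigma> h) + D * emeasure (active_pmf p L) B"
    by (simp add: nn_integral_add nn_integral_cmult_indicator nn_integral_bind_pmf)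
  finally show ?thesis .
qed

lemma one_plus_ennreal: "0 \<le> y \<Longrightarrow> 1 + ennreal y = ennreal (1 + y)"
  by (simp add: ennreal_plus)

subsection \<open>Histories on the cycle\<close>

lemma found_Nil[simp]: "\<not> found e []"
  by (simp add: found_def)

lemma found_append[simp]: "found e (h @ [x]) \<longleftrightarrow> found e h \<or> snd x = Some e"
  by (auto simp: found_def)

lemma pos_Nil[simp]: "pos L [] = 0"
  by (simp add: pos_def)

lemma pos_append[simp]: "pos L (h @ [x]) = move L (pos L h) (snd x)"
  by (simp add: pos_def)

lemma move_None[simp]: "move L v None = v"
  by (simp add: move_def)

lemma legal_hist_Nil[simp]: "legal_hist L []"
  by (simp add: legal_hist_def)

lemma legal_hist_append[simp]:
  "legal_hist L (h @ [x]) \<longleftrightarrow> legal_hist L h \<and> legal L (pos L h) (fst x) (snd x)"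
  by (auto simp: legal_hist_def nth_append less_Suc_eq)

lemma first_move_Nil[simp]: "first_move [] = None"
  by (simp add: first_move_def)

lemma first_move_append[simp]:
  "first_move (h @ [x]) = (if first_move h = None then snd x else first_move h)"
proof (cases "filter (\<lambda>x. snd x \<noteq> None) h")
  case (Cons y ys)
  then have "y \<in> set (filter (\<lambda>x. snd x \<noteq> None) h)" by simp
  then have "snd y \<noteq> None" by simp
  with Cons show ?thesis by (auto simp: first_move_def)
qed (auto simp: first_move_def split: list.splits)

lemma first_move_None_pos: "first_move h = None \<Longrightarrow> pos L h = 0"
  by (induction h rule: rev_induct) (auto split: if_splits)

lemma first_move_None_not_found: "first_move h = None \<Longrightarrow> \<not> found e h"
  by (induction h rule: rev_induct) (auto split: if_splits)

lemma found_if_first_move: "first_move h \<noteq> None \<Longrightarrow> \<exists>e. found e h"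
  by (induction h rule: rev_induct) (auto split: if_splits)

lemma legal_hist_pos_less: "L > 0 \<Longrightarrow> legal_hist L h \<Longrightarrow> pos L h < L"
  by (induction h rule: rev_induct) (auto simp: move_def legal_def split: option.splits)

lemma legal_hist_found_less: "legal_hist L h \<Longrightarrow> found e h \<Longrightarrow> e < L"
  by (induction h rule: rev_induct) (auto simp: legal_def split: option.splits)

lemma pred_mod_cycle: "(v::nat) < L \<Longrightarrow> (v + L - 1) mod L = (if v = 0 then L - 1 else v - 1)"
  by (cases v) auto

lemma cycle_incident_iff:
  assumes "(v::nat) < L" "e < L"
  shows "(v = e \<or> v = (e + 1) mod L) \<longleftrightarrow> (e = v \<or> e = (v + L - 1) mod L)"
proof -
  have "(e + 1) mod L = (if e + 1 = L then 0 else e + 1)" by (cases "e + 1 = L") (use assms in auto)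
  then show ?thesis unfolding pred_mod_cycle[OF assms(1)] using assms by auto
qed

lemma legal_hist_at_found_edge:
  assumes "legal_hist L h" "found e h"
  shows "\<exists>e'. found e' h \<and> e' < L \<and> (pos L h = e' \<or> pos L h = (e' + 1) mod L)"
  using assms
proof (induction h rule: rev_induct)
  case (snoc x h)
  show ?case
  proof (cases "snd x")
    case (Some e')
    with snoc.prems show ?thesis by (intro exI[of _ e']) (auto simp: legal_def move_def)
  qed (use snoc in auto)
qed simp

lemma euler_at_root:
  assumes "L \<ge> 2" "first_move h = None"
  shows "euler L h A =
     (if \<not> A 0 \<and> \<not> A (L - 1) then return_pmf None
      else if A 0 \<and> \<not> A (L - 1) then return_pmf (Some 0)
      else if \<not> A 0 \<and> A (L - 1) then return_pmf (Some (L - 1))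
      else map_pmf Some (pmf_of_set {0, L - 1}))"
proof -
  have "{e. e \<in> {a, b} \<and> A e} = (if A a then {a} else {}) \<union> (if A b then {b} else {})" for a b
    by auto
  from this[of 0 "L - 1"] show ?thesis
    using assms by (auto simp: euler_def Let_def pmf_of_set_singleton insert_commute)
qed

lemma euler_on_tour:
  assumes "first_move h = Some e0"
  shows "euler L h A = (let e = if e0 = 0 then pos L h else (pos L h + L - 1) mod L in
     if A e then return_pmf (Some e) else return_pmf None)"
  using assms by (simp add: euler_def Let_def)

lemma searcher_strategy_euler:
  assumes "L \<ge> 2"
  shows "searcher_strategy L (euler L)"
  unfolding searcher_strategy_def
proof (intro allI impI ballI)
  fix h A a assume "legal_hist L h" and a: "a \<in> set_pmf (euler L h A)"
  then have v: "pos L h < L" using legal_hist_pos_less assms by simp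
  show "legal L (pos L h) A a"
  proof (cases "first_move h")
    case None
    then have "a = None \<or> (a = Some 0 \<and> A 0) \<or> (a = Some (L - 1) \<and> A (L - 1))"
      using a assms by (auto simp: euler_at_root split: if_splits)
    with None assms show ?thesis by (auto simp: legal_def first_move_None_pos)
  next
    case (Some e0)
    define e where "e = (if e0 = 0 then pos L h else (pos L h + L - 1) mod L)"
    have "a = None \<or> (a = Some e \<and> A e)"
      using a Some by (auto simp: euler_on_tour e_def Let_def split: if_splits)
    moreover have "e < L" "pos L h = e \<or> pos L h = (e + 1) mod L"
      using cycle_incident_iff[OF v, of e] v assms by (auto simp: e_def)
    ultimately show ?thesis by (auto simp: legal_def)
  qed
qed

lemma map_active_pmf_edge:
  "e < L \<Longrightarrow> map_pmf (\<lambda>A. A e) (active_pmf p L) = bernoulli_pmf p"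
  unfolding active_pmf_def by (subst Pi_pmf_component) auto

lemma map_active_pmf_edge_pair:
  assumes "i < L" "j < L" "i \<noteq> j"
  shows "map_pmf (\<lambda>A. (A i, A j)) (active_pmf p L) = pair_pmf (bernoulli_pmf p) (bernoulli_pmf p)"
proof -
  define R where "R = Pi_pmf ({..<L} - {i}) False (\<lambda>_. bernoulli_pmf p)"
  have "{..<L} = insert i ({..<L} - {i})" using assms by auto
  then have "active_pmf p L = map_pmf (\<lambda>(y, f). f(i := y)) (pair_pmf (bernoulli_pmf p) R)"
    unfolding active_pmf_def R_def by (metis Pi_pmf_insert finite_Diff finite_lessThan Diff_iff insertI1)
  then have "map_pmf (\<lambda>A. (A i, A j)) (active_pmf p L)
      = map_pmf (apsnd (\<lambda>f. f j)) (pair_pmf (bernoulli_pmf p) R)"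
    using assms by (simp add: pmf.map_comp o_def case_prod_unfold apsnd_def map_prod_def)
  also have "\<dots> = pair_pmf (bernoulli_pmf p) (map_pmf (\<lambda>f. f j) R)"
    by (rule pair_map_pmf2[symmetric])
  also have "map_pmf (\<lambda>f. f j) R = bernoulli_pmf p"
    using assms unfolding R_def by (subst Pi_pmf_component) auto
  finally show ?thesis .
qed

lemma nn_integral_active_pmf_edge:
  assumes "e < L" "0 \<le> p" "p \<le> 1" "\<And>b. 0 \<le> G b"
  shows "(\<integral>\<^sup>+A. ennreal (G (A e)) \<partial>active_pmf p L) = ennreal (G True * p + G False * (1 - p))"
proof -
  have "(\<integral>\<^sup>+A. ennreal (G (A e)) \<partial>active_pmf p L)
      = (\<integral>\<^sup>+b. ennreal (G b) \<partial>map_pmf (\<lambda>A. A e) (active_pmf p L))"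
    by simp
  then show ?thesis
    using assms by (simp add: map_active_pmf_edge ennreal_mult'' ennreal_plus[symmetric])
qed

lemma nn_integral_active_pmf_edge_pair:
  assumes "i < L" "j < L" "i \<noteq> j" "0 \<le> p" "p \<le> 1" "\<And>b c. 0 \<le> G b c"
  shows "(\<integral>\<^sup>+A. ennreal (G (A i) (A j)) \<partial>active_pmf p L)
     = ennreal (G True True * p * p + G True False * p * (1 - p)
                + G False True * (1 - p) * p + G False False * (1 - p) * (1 - p))"
proof -
  have "(\<integral>\<^sup>+A. ennreal (G (A i) (A j)) \<partial>active_pmf p L)
      = (\<integral>\<^sup>+x. ennreal (case_prod G x) \<partial>map_pmf (\<lambda>A. (A i, A j)) (active_pmf p L))"
    by simp
  also have "\<dots> = (\<integral>\<^sup>+b. \<integral>\<^sup>+c. ennreal (G b c) \<partial>bernoulli_pmf p \<partial>bernoulli_pmf p)"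
    using assms by (simp add: map_active_pmf_edge_pair nn_integral_pair_pmf')
  also have "\<dots> = ennreal ((G True True * p + G True False * (1 - p)) * p
                          + (G False True * p + G False False * (1 - p)) * (1 - p))"
    using assms by (simp add: ennreal_mult'' ennreal_plus[symmetric])
  finally show ?thesis by (simp add: algebra_simps)
qed

lemma emeasure_pmf_Collect:
  "emeasure (measure_pmf M) {x. P x} = (\<integral>\<^sup>+x. ennreal (if P x then 1 else 0) \<partial>M)"
proof -
  have "(\<integral>\<^sup>+x. ennreal (if P x then 1 else 0) \<partial>M) = (\<integral>\<^sup>+x. indicator {x. P x} x \<partial>M)"
    by (intro nn_integral_cong) (simp add: indicator_def)
  then show ?thesis by simp
qed

lemma emeasure_active_edge:
  assumes "e < L" "0 \<le> p" "p \<le> 1"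
  shows "emeasure (active_pmf p L) {A. A e} = ennreal p"
  unfolding emeasure_pmf_Collect using assms by (subst nn_integral_active_pmf_edge) auto

lemma emeasure_active_edge_pair:
  assumes "i < L" "j < L" "i \<noteq> j" "0 \<le> p" "p \<le> 1"
  shows "emeasure (active_pmf p L) {A. A i \<or> A j} = ennreal (1 - (1 - p)\<^sup>2)"
  unfolding emeasure_pmf_Collect using assms
  by (subst nn_integral_active_pmf_edge_pair) (auto simp: algebra_simps power2_eq_square)

definition search_value :: "real \<Rightarrow> nat \<Rightarrow> real" where
  "search_value p L = 1 / (1 - (1 - p)\<^sup>2) + (real L - 1) / (2 * p)"

lemma one_minus_sq_pos: "0 < (p::real) \<Longrightarrow> p \<le> 1 \<Longrightarrow> 0 < 1 - (1 - p)\<^sup>2"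
  by (simp add: power2_eq_square algebra_simps mult_pos_pos)

lemma search_value_pos: "L \<ge> 1 \<Longrightarrow> 0 < p \<Longrightarrow> p \<le> 1 \<Longrightarrow> 0 < search_value p L"
  unfolding search_value_def using one_minus_sq_pos[of p] by (intro add_pos_nonneg) auto

text \<open>The one-stage equation of the Eulerian strategy at the root: with probability
  \<open>(1 - p)\<^sup>2\<close> it waits; otherwise the tour starts and its expected remaining time \<open>d / p\<close>
  averages to the last two terms, whichever edge the hider chose.\<close>

lemma search_value_fixed_point:
  assumes "0 < p" "p \<le> 1"
  shows "search_value p L
       = 1 + search_value p L * (1 - p) * (1 - p) + (real L - 1) * (1 - p) + p * (real L - 1) / 2"
proof -
  have q: "1 - (1 - p)\<^sup>2 = p * (2 - p)" by (simp add: power2_eq_square algebra_simps)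
  have "search_value p L * (p * (2 - p)) = 1 + (real L - 1) * (2 - p) / 2"
    unfolding search_value_def q using assms by (simp add: field_simps)
  then show ?thesis by (simp add: power2_eq_square field_simps)
qed

subsection \<open>Lower bound against the uniform hider\<close>

definition n_found :: "nat \<Rightarrow> history \<Rightarrow> nat" where
  "n_found L h = card {e \<in> {..<L}. found e h}"

definition unfound_fraction :: "nat \<Rightarrow> history \<Rightarrow> real" where
  "unfound_fraction L h = (real L - real (n_found L h)) / real L"

definition found_potential :: "real \<Rightarrow> nat \<Rightarrow> nat \<Rightarrow> real" where
  "found_potential p L k = (if k = 0 then search_value p L
     else (real L - real k) * (real L - real k + 1) / (2 * real L * p))"

definition fresh_edge_event :: "nat \<Rightarrow> history \<Rightarrow> active set" where
  "fresh_edge_event L h =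
     {A. \<exists>e < L. A e \<and> (pos L h = e \<or> pos L h = (e + 1) mod L) \<and> \<not> found e h}"

lemma n_found_le: "n_found L h \<le> L"
  unfolding n_found_def by (rule order_trans[OF card_mono[of "{..<L}"]]) auto

lemma n_found_Nil[simp]: "n_found L [] = 0"
  by (simp add: n_found_def)

lemma n_found_append:
  assumes "legal L (pos L h) A a"
  shows "n_found L (h @ [(A, a)])
       = (if \<exists>e. a = Some e \<and> \<not> found e h then Suc (n_found L h) else n_found L h)"
proof (cases "\<exists>e. a = Some e \<and> \<not> found e h")
  case True
  then obtain e where "a = Some e" "\<not> found e h" by blast
  moreover from assms this(1) have "e < L" by (simp add: legal_def)
  ultimately have "{e' \<in> {..<L}. found e' (h @ [(A, a)])} = insert e {e' \<in> {..<L}. found e' h}"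
    by auto
  with True \<open>\<not> found e h\<close> show ?thesis by (simp add: n_found_def)
qed (auto simp: n_found_def intro!: arg_cong[where f = card])

lemma n_found_0_first_move:
  assumes "legal_hist L h" "n_found L h = 0"
  shows "first_move h = None"
proof (rule ccontr)
  assume "first_move h \<noteq> None"
  then obtain e where "found e h" using found_if_first_move by blast
  with assms(1) have "e \<in> {e \<in> {..<L}. found e h}" by (simp add: legal_hist_found_less)
  then have "n_found L h > 0" unfolding n_found_def by (subst card_gt_0_iff) auto
  with assms(2) show False by simp
qed

lemma unfound_fraction_eq_sum:
  "unfound_fraction L h = (\<Sum>e<L. if found e h then 0 else 1) / real L"
proof -
  have "card {e \<in> {..<L}. \<not> found e h} = card ({..<L} - {e \<in> {..<L}. found e h})"
    by (rule arg_cong[where f = card]) blast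
  also have "\<dots> = L - n_found L h" unfolding n_found_def by (subst card_Diff_subset) auto
  finally have card: "card {e \<in> {..<L}. \<not> found e h} = L - n_found L h" .
  have "real (card {e \<in> {..<L}. \<not> found e h}) = (\<Sum>e \<in> {e \<in> {..<L}. \<not> found e h}. 1)"
    by simp
  also have "\<dots> = (\<Sum>e<L. if found e h then 0 else 1)"
    by (subst sum.inter_filter) (auto intro!: sum.cong)
  finally show ?thesis
    unfolding unfound_fraction_def using card n_found_le[of L h] by (simp add: of_nat_diff)
qed

lemma payoff_uniform_hider:
  assumes "L \<ge> 1"
  shows "payoff p L \<sigma> (pmf_of_set {..<L})
       = (\<Sum>t. \<integral>\<^sup>+h. ennreal (unfound_fraction L h) \<partial>hist p L \<sigma> t)"
proof -
  define P where "P t e = emeasure (hist p L \<sigma> t) {h. \<not> found e h}" for t e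
  have "payoff p L \<sigma> (pmf_of_set {..<L}) = (\<Sum>e<L. search_time p L \<sigma> e) / of_nat L"
    unfolding payoff_def using assms by (subst nn_integral_pmf_of_set) (auto simp: lessThan_empty_iff)
  also have "(\<Sum>e<L. search_time p L \<sigma> e) = (\<Sum>t. \<Sum>e<L. P t e)"
    unfolding search_time_def P_def measure_pmf.emeasure_eq_measure
    by (rule suminf_sum[symmetric]) (rule summableI)
  also have "(\<Sum>t. \<Sum>e<L. P t e) / of_nat L = (\<Sum>t. (\<Sum>e<L. P t e) / of_nat L)"
    by (rule ennreal_suminf_divide[symmetric])
  also have "(\<lambda>t. (\<Sum>e<L. P t e) / of_nat L)
      = (\<lambda>t. \<integral>\<^sup>+h. ennreal (unfound_fraction L h) \<partial>hist p L \<sigma> t)"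
  proof
    fix t
    have "ennreal (unfound_fraction L h)
        = (\<Sum>e<L. ennreal (if found e h then 0 else 1)) / of_nat L" for h
      unfolding unfound_fraction_eq_sum using assms
      by (simp add: divide_ennreal[symmetric] ennreal_of_nat_eq_real_of_nat sum_nonneg)
    moreover have "(if \<not> b then 1 else 0) = (if b then 0 else (1::real))" for b by simp
    ultimately show "(\<Sum>e<L. P t e) / of_nat L
        = (\<integral>\<^sup>+h. ennreal (unfound_fraction L h) \<partial>hist p L \<sigma> t)"
      by (simp add: P_def emeasure_pmf_Collect nn_integral_divide nn_integral_sum del: sum_ennreal)
  qed
  finally show ?thesis .
qed

lemma found_potential_le_unfound_fraction:
  assumes "L \<ge> 2" "0 < p" "p \<le> 1" "k \<le> L"
  shows "found_potential p L k \<le> real L * search_value p L * ((real L - real k) / real L)"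
proof (cases "k = 0")
  case False
  have "(real L - real k) * (real L - real k + 1) \<le> (real L - real k) * real L"
    using assms False by (intro mult_left_mono) auto
  then have "found_potential p L k \<le> (real L - real k) * real L / (2 * real L * p)"
    using assms False unfolding found_potential_def
    by (simp only: if_False) (rule divide_right_mono, simp_all)
  also have "\<dots> = (real L - real k) * (1 / (2 * p))" using assms by simp
  also have "\<dots> \<le> (real L - real k) * search_value p L"
  proof (rule mult_left_mono)
    have "1 / (2 * p) \<le> (real L - 1) / (2 * p)"
      using assms by (intro divide_right_mono) auto
    moreover have "0 \<le> 1 / (1 - (1 - p)\<^sup>2)" using assms one_minus_sq_pos[of p] by simp
    ultimately show "1 / (2 * p) \<le> search_value p L" unfolding search_value_def by linarith
  qed (use assms in simp)
  finally show ?thesis using assms by (simp add: mult.commute)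
qed (use assms search_value_pos[of L p] in \<open>simp add: found_potential_def mult_le_cancel_right1\<close>)

lemma found_potential_nonneg:
  assumes "L \<ge> 1" "0 < p" "p \<le> 1" "k \<le> L"
  shows "0 \<le> found_potential p L k"
  using assms search_value_pos[of L p] by (auto simp: found_potential_def)

lemma found_potential_drop:
  assumes "L \<ge> 2" "0 < p" "k < L"
  shows "found_potential p L k - found_potential p L (Suc k)
       = (if k = 0 then 1 / (1 - (1 - p)\<^sup>2) else (real L - real k) / (real L * p))"
  using assms by (simp add: found_potential_def search_value_def field_simps)

lemma emeasure_fresh_edge_event_root:
  assumes "L \<ge> 2" "0 \<le> p" "p \<le> 1" "first_move h = None"
  shows "emeasure (active_pmf p L) (fresh_edge_event L h) \<le> ennreal (1 - (1 - p)\<^sup>2)"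
proof -
  have "fresh_edge_event L h \<subseteq> {A. A 0 \<or> A (L - 1)}"
  proof
    fix A assume "A \<in> fresh_edge_event L h"
    then obtain e where "e < L" "A e" "0 = e \<or> 0 = (e + 1) mod L"
      unfolding fresh_edge_event_def first_move_None_pos[OF assms(4)] by blast
    moreover from this(1,3) have "e = 0 \<or> e = L - 1"
      using cycle_incident_iff[of 0 L e] assms(1) by simp
    ultimately show "A \<in> {A. A 0 \<or> A (L - 1)}" by auto
  qed
  then have "emeasure (active_pmf p L) (fresh_edge_event L h)
      \<le> emeasure (active_pmf p L) {A. A 0 \<or> A (L - 1)}"
    by (rule emeasure_mono) simp
  also have "\<dots> = ennreal (1 - (1 - p)\<^sup>2)" using assms by (intro emeasure_active_edge_pair) auto
  finally show ?thesis .
qed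

lemma emeasure_fresh_edge_event_tour:
  assumes "L \<ge> 2" "0 \<le> p" "p \<le> 1" "legal_hist L h" "found e0 h"
  shows "emeasure (active_pmf p L) (fresh_edge_event L h) \<le> ennreal p"
proof -
  define v where "v = pos L h"
  have v: "v < L" using legal_hist_pos_less assms unfolding v_def by simp
  obtain e' where e': "found e' h" "e' < L" "e' = v \<or> e' = (v + L - 1) mod L"
    using legal_hist_at_found_edge[OF assms(4,5)] cycle_incident_iff[OF v] unfolding v_def by blast
  define e where "e = (if e' = v then (v + L - 1) mod L else v)"
  have "fresh_edge_event L h \<subseteq> {A. A e}"
  proof
    fix A assume "A \<in> fresh_edge_event L h"
    then obtain e'' where e'': "e'' < L" "A e''" "v = e'' \<or> v = (e'' + 1) mod L" "\<not> found e'' h"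
      unfolding fresh_edge_event_def v_def by blast
    then have "e'' = v \<or> e'' = (v + L - 1) mod L" using cycle_incident_iff[OF v] by blast
    moreover have "e'' \<noteq> e'" using e'(1) e''(4) by auto
    ultimately have "e'' = e" using e'(3) unfolding e_def by auto
    with e''(2) show "A \<in> {A. A e}" by simp
  qed
  then have "emeasure (active_pmf p L) (fresh_edge_event L h) \<le> emeasure (active_pmf p L) {A. A e}"
    by (rule emeasure_mono) simp
  also have "\<dots> = ennreal p" using assms v by (intro emeasure_active_edge) (auto simp: e_def)
  finally show ?thesis .
qed

lemma found_potential_drop_fresh_edge_event:
  assumes L: "L \<ge> 2" and p: "0 < p" "p \<le> 1" and h: "legal_hist L h" and k: "n_found L h < L"
  shows "ennreal (found_potential p L (n_found L h) - found_potential p L (Suc (n_found L h)))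
           * emeasure (active_pmf p L) (fresh_edge_event L h)
         \<le> ennreal (unfound_fraction L h)"
proof -
  define k where "k = n_found L h"
  define D where "D = found_potential p L k - found_potential p L (Suc k)"
  define \<pi> where "\<pi> = (if k = 0 then 1 - (1 - p)\<^sup>2 else p)"
  have D: "D = (if k = 0 then 1 / (1 - (1 - p)\<^sup>2) else (real L - real k) / (real L * p))"
    unfolding D_def k_def using found_potential_drop[OF L p(1) k] .
  have "emeasure (active_pmf p L) (fresh_edge_event L h) \<le> ennreal \<pi>"
  proof (cases "k = 0")
    case True
    then show ?thesis using emeasure_fresh_edge_event_root L p n_found_0_first_move[OF h]
      by (simp add: k_def \<pi>_def)
  next
    case False
    then obtain e0 where "found e0 h" unfolding k_def n_found_def by (auto simp: card_gt_0_iff)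
    then show ?thesis using emeasure_fresh_edge_event_tour L p h False by (simp add: \<pi>_def)
  qed
  moreover have "0 \<le> D" using D one_minus_sq_pos[OF p] p k by (auto simp: k_def)
  ultimately have "ennreal D * emeasure (active_pmf p L) (fresh_edge_event L h) \<le> ennreal (D * \<pi>)"
    using mult_left_mono[of _ "ennreal \<pi>" "ennreal D"] by (simp add: ennreal_mult'[symmetric])
  also have "D * \<pi> = unfound_fraction L h"
    using D one_minus_sq_pos[OF p] p L by (simp add: \<pi>_def unfound_fraction_def k_def)
  finally show ?thesis by (simp add: D_def k_def)
qed

lemma found_potential_le_append:
  assumes L: "L \<ge> 2" and p: "0 < p" "p \<le> 1" and k: "n_found L h < L"
    and legal: "legal L (pos L h) A a"
  shows "ennreal (found_potential p L (n_found L h))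
       \<le> ennreal (found_potential p L (n_found L (h @ [(A, a)])))
         + ennreal (found_potential p L (n_found L h) - found_potential p L (Suc (n_found L h)))
           * indicator (fresh_edge_event L h) A"
proof (cases "\<exists>e. a = Some e \<and> \<not> found e h")
  case True
  then have "A \<in> fresh_edge_event L h" using legal by (auto simp: fresh_edge_event_def legal_def)
  moreover have "0 \<le> found_potential p L (Suc (n_found L h))"
    using L p k by (intro found_potential_nonneg) auto
  moreover have "0 \<le> found_potential p L (n_found L h) - found_potential p L (Suc (n_found L h))"
    unfolding found_potential_drop[OF L p(1) k] using one_minus_sq_pos[OF p] p k by auto
  ultimately show ?thesis using True legal
    by (simp add: n_found_append ennreal_plus[symmetric] del: ennreal_plus)
next
  case False
  then show ?thesis by (simp only: n_found_append[OF legal] if_False) simp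
qed

lemma found_potential_step:
  assumes L: "L \<ge> 2" and p: "0 < p" "p \<le> 1" and \<sigma>: "searcher_strategy L \<sigma>"
    and h: "legal_hist L h"
  shows "ennreal (found_potential p L (n_found L h))
       \<le> ennreal (unfound_fraction L h)
         + (\<integral>\<^sup>+h'. ennreal (found_potential p L (n_found L h')) \<partial>next_hist p L \<sigma> h)"
proof (cases "n_found L h = L")
  case False
  then have k: "n_found L h < L" using n_found_le[of L h] by simp
  define D where "D = found_potential p L (n_found L h) - found_potential p L (Suc (n_found L h))"
  have "ennreal (found_potential p L (n_found L h))
      \<le> (\<integral>\<^sup>+h'. ennreal (found_potential p L (n_found L h')) \<partial>next_hist p L \<sigma> h)
        + ennreal D * emeasure (active_pmf p L) (fresh_edge_event L h)"
    using found_potential_le_append[OF L p k] \<sigma> h unfolding D_def searcher_strategy_def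
    by (intro nn_integral_next_hist_lower) blast
  also have "\<dots> \<le> (\<integral>\<^sup>+h'. ennreal (found_potential p L (n_found L h')) \<partial>next_hist p L \<sigma> h)
        + ennreal (unfound_fraction L h)"
    unfolding D_def by (intro add_left_mono found_potential_drop_fresh_edge_event[OF L p h k])
  finally show ?thesis by (simp only: add.commute)
qed (use L in \<open>simp add: found_potential_def\<close>)

lemma uniform_hider_payoff_ge:
  assumes L: "L \<ge> 2" and p: "0 < p" "p \<le> 1" and \<sigma>: "searcher_strategy L \<sigma>"
  shows "ennreal (search_value p L) \<le> payoff p L \<sigma> (pmf_of_set {..<L})"
proof -
  have "ennreal (found_potential p L (n_found L []))
      \<le> (\<Sum>t. \<integral>\<^sup>+h. ennreal (unfound_fraction L h) \<partial>hist p L \<sigma> t)"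
  proof (rule potential_le_suminf_hist[where I = "legal_hist L"
        and M = "ennreal (real L * search_value p L)"])
    show "legal_hist L (h @ [(A, a)])" if "legal_hist L h" "a \<in> set_pmf (\<sigma> h A)" for h A a
      using that \<sigma> by (simp add: searcher_strategy_def)
    show "ennreal (found_potential p L (n_found L h))
        \<le> ennreal (real L * search_value p L) * ennreal (unfound_fraction L h)" for h
    proof -
      have "found_potential p L (n_found L h) \<le> real L * search_value p L * unfound_fraction L h"
        unfolding unfound_fraction_def by (rule found_potential_le_unfound_fraction[OF L p n_found_le])
      then show ?thesis
        using search_value_pos[of L p] L p by (simp add: ennreal_mult'[symmetric] ennreal_leI)
    qed
  qed (use found_potential_step[OF L p \<sigma>] in simp_all)
  then show ?thesis using L by (simp add: found_potential_def payoff_uniform_hider)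
qed

subsection \<open>Upper bound for the uniform Eulerian strategy\<close>

text \<open>On the tour, \<open>e + 1 - pos\<close> (clockwise, first move along edge \<open>0\<close>) and \<open>pos - e\<close>
  (counterclockwise) count the edges still to be traversed up to and including \<open>e\<close>.\<close>

definition euler_potential :: "real \<Rightarrow> nat \<Rightarrow> nat \<Rightarrow> history \<Rightarrow> real" where
  "euler_potential p L e h = (if found e h then 0
     else if first_move h = None then search_value p L
     else if first_move h = Some 0 then (real e + 1 - real (pos L h)) / p
     else (real (pos L h) - real e) / p)"

definition euler_invariant :: "nat \<Rightarrow> nat \<Rightarrow> history \<Rightarrow> bool" where
  "euler_invariant L e h \<longleftrightarrow> found e h \<or> first_move h = None
     \<or> (first_move h = Some 0 \<and> 1 \<le> pos L h \<and> pos L h \<le> e)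
     \<or> (first_move h = Some (L - 1) \<and> e < pos L h \<and> pos L h \<le> L - 1)"

lemma euler_invariant_append:
  assumes L: "L \<ge> 2" and e: "e < L" and inv: "euler_invariant L e h"
    and a: "a \<in> set_pmf (euler L h A)"
  shows "euler_invariant L e (h @ [(A, a)])"
proof (cases "found e h")
  case False
  show ?thesis
  proof (cases "first_move h")
    case None
    then have "a = None \<or> a = Some 0 \<or> a = Some (L - 1)"
      using a L by (auto simp: euler_at_root split: if_splits)
    with None L e show ?thesis
      by (auto simp: euler_invariant_def move_def first_move_None_pos)
  next
    case (Some e0)
    show ?thesis
    proof (cases "e0 = 0")
      case True
      with inv False Some have v: "1 \<le> pos L h" "pos L h \<le> e"
        by (auto simp: euler_invariant_def)
      from a Some True have "a = None \<or> a = Some (pos L h)"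
        by (auto simp: euler_on_tour Let_def split: if_splits)
      with Some True v e show ?thesis
        by (cases "pos L h = e") (auto simp: euler_invariant_def move_def)
    next
      case nz: False
      with inv False Some have e0: "e0 = L - 1" and v: "e < pos L h" "pos L h \<le> L - 1"
        by (auto simp: euler_invariant_def)
      have "(pos L h + L - 1) mod L = pos L h - 1" using pred_mod_cycle[of "pos L h" L] v by simp
      with a Some nz have "a = None \<or> a = Some (pos L h - 1)"
        by (auto simp: euler_on_tour Let_def split: if_splits)
      moreover have "move L (pos L h) (Some (pos L h - 1)) = pos L h - 1" using v by (simp add: move_def)
      ultimately show ?thesis using Some e0 v by (auto simp: euler_invariant_def)
    qed
  qed
qed (simp add: euler_invariant_def)

lemma euler_tour_step:
  assumes L: "L \<ge> 2" and e: "e < L" and inv: "euler_invariant L e h"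
    and nf: "\<not> found e h" and tour: "first_move h \<noteq> None" and p: "0 < p"
  obtains \<epsilon> where "\<epsilon> < L"
    and "\<And>A. euler L h A = return_pmf (if A \<epsilon> then Some \<epsilon> else None)"
    and "\<And>A. euler_potential p L e (h @ [(A, None)]) = euler_potential p L e h"
    and "\<And>A. euler_potential p L e (h @ [(A, Some \<epsilon>)]) = euler_potential p L e h - 1 / p"
    and "1 / p \<le> euler_potential p L e h"
proof -
  obtain e0 where e0: "first_move h = Some e0" using tour by blast
  define v where "v = pos L h"
  show ?thesis
  proof (cases "e0 = 0")
    case True
    with inv nf e0 have v: "1 \<le> v" "v \<le> e" by (auto simp: euler_invariant_def v_def)
    show ?thesis
    proof (rule that[of v])
      show "euler_potential p L e (h @ [(A, Some v)]) = euler_potential p L e h - 1 / p" for A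
        using nf e0 True v e by (cases "v = e")
          (auto simp: euler_potential_def move_def v_def diff_divide_distrib[symmetric])
    qed (use e0 True v e nf p in \<open>auto simp: euler_on_tour Let_def euler_potential_def v_def
        intro!: divide_right_mono\<close>)
  next
    case False
    with inv nf e0 have v: "e < v" "v \<le> L - 1" by (auto simp: euler_invariant_def v_def)
    have pm: "(v + L - 1) mod L = v - 1" using pred_mod_cycle[of v L] v by simp
    show ?thesis
    proof (rule that[of "v - 1"])
      show "euler_potential p L e (h @ [(A, Some (v - 1))]) = euler_potential p L e h - 1 / p" for A
        using nf e0 False v by (cases "v - 1 = e")
          (auto simp: euler_potential_def move_def v_def of_nat_diff diff_divide_distrib[symmetric])
    qed (use e0 False pm v e nf p in \<open>auto simp: euler_on_tour Let_def euler_potential_def v_def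
        intro!: divide_right_mono\<close>)
  qed
qed

lemma euler_potential_step_tour:
  assumes L: "L \<ge> 2" and p: "0 < p" "p \<le> 1" and e: "e < L" and inv: "euler_invariant L e h"
    and nf: "\<not> found e h" and tour: "first_move h \<noteq> None"
  shows "1 + (\<integral>\<^sup>+h'. ennreal (euler_potential p L e h') \<partial>next_hist p L (euler L) h)
       = ennreal (euler_potential p L e h)"
proof -
  obtain \<epsilon> where \<epsilon>: "\<epsilon> < L"
    and eu: "\<And>A. euler L h A = return_pmf (if A \<epsilon> then Some \<epsilon> else None)"
    and wait: "\<And>A. euler_potential p L e (h @ [(A, None)]) = euler_potential p L e h"
    and go: "\<And>A. euler_potential p L e (h @ [(A, Some \<epsilon>)]) = euler_potential p L e h - 1 / p"
    and ge: "1 / p \<le> euler_potential p L e h"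
    using euler_tour_step[OF L e inv nf tour p(1)] by blast
  define \<Psi> where "\<Psi> = euler_potential p L e h"
  have "0 \<le> \<Psi> - 1 / p" using ge by (simp add: \<Psi>_def)
  have "1 \<le> \<Psi>" using ge p by (simp add: \<Psi>_def le_divide_eq_1_pos order_trans[rotated])
  have "(\<integral>\<^sup>+h'. ennreal (euler_potential p L e h') \<partial>next_hist p L (euler L) h)
      = (\<integral>\<^sup>+A. ennreal (if A \<epsilon> then \<Psi> - 1 / p else \<Psi>) \<partial>active_pmf p L)"
    by (simp add: nn_integral_bind_pmf eu) (intro nn_integral_cong, simp add: wait go \<Psi>_def)
  also have "\<dots> = ennreal ((\<Psi> - 1 / p) * p + \<Psi> * (1 - p))"
    using \<epsilon> p \<open>0 \<le> \<Psi> - 1 / p\<close> \<open>1 \<le> \<Psi>\<close>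
    by (subst nn_integral_active_pmf_edge[where G = "\<lambda>b. if b then \<Psi> - 1 / p else \<Psi>"]) auto
  also have "(\<Psi> - 1 / p) * p + \<Psi> * (1 - p) = \<Psi> - 1"
    using p by (simp add: field_simps)
  finally show ?thesis using \<open>1 \<le> \<Psi>\<close> by (simp add: \<Psi>_def one_plus_ennreal)
qed

lemma nn_integral_euler_potential_root:
  assumes L: "L \<ge> 2" and p: "0 < p" "p \<le> 1" and e: "e < L" and root: "first_move h = None"
  shows "(\<integral>\<^sup>+h'. ennreal (euler_potential p L e h') \<partial>next_hist p L (euler L) h)
       = ennreal (search_value p L * (1 - p) * (1 - p) + (real L - 1) * (1 - p) + p * (real L - 1) / 2)"
proof -
  define V where "V = search_value p L"
  define G where "G b c = (if b \<and> c then (real e / p + (real L - 1 - real e) / p) / 2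
      else if b then real e / p
      else if c then (real L - 1 - real e) / p else V)" for b c
  have V: "0 < V" using L p by (simp add: V_def search_value_pos)
  have G: "0 \<le> G b c" for b c using V e p by (auto simp: G_def)
  have half: "ennreal x / 2 = ennreal (x / 2)" if "0 \<le> x" for x
    using divide_ennreal[of x 2] that by simp
  have "(\<integral>\<^sup>+a. ennreal (euler_potential p L e (h @ [(A, a)])) \<partial>euler L h A)
      = ennreal (G (A 0) (A (L - 1)))" for A
  proof -
    have "(0::nat) \<noteq> L - 1" "move L 0 (Some 0) = 1" "move L 0 (Some (L - 1)) = L - 1"
      using L by (auto simp: move_def)
    then show ?thesis using L e p root
      by (auto simp: euler_at_root G_def V_def euler_potential_def first_move_None_pos
          first_move_None_not_found nn_integral_pmf_of_set of_nat_diff half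
          ennreal_plus[symmetric] simp del: ennreal_plus)
  qed
  then have "(\<integral>\<^sup>+h'. ennreal (euler_potential p L e h') \<partial>next_hist p L (euler L) h)
      = (\<integral>\<^sup>+A. ennreal (G (A 0) (A (L - 1))) \<partial>active_pmf p L)"
    by (simp add: nn_integral_bind_pmf)
  also have "\<dots> = ennreal (G True True * p * p + G True False * p * (1 - p)
      + G False True * (1 - p) * p + G False False * (1 - p) * (1 - p))"
    using L p G by (intro nn_integral_active_pmf_edge_pair) auto
  also have "G True True * p * p + G True False * p * (1 - p)
      + G False True * (1 - p) * p + G False False * (1 - p) * (1 - p)
      = V * (1 - p) * (1 - p) + (real L - 1) * (1 - p) + p * (real L - 1) / 2"
    using p by (simp add: G_def field_simps)
  finally show ?thesis by (simp add: V_def)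
qed

lemma euler_potential_step_root:
  assumes L: "L \<ge> 2" and p: "0 < p" "p \<le> 1" and e: "e < L" and root: "first_move h = None"
  shows "1 + (\<integral>\<^sup>+h'. ennreal (euler_potential p L e h') \<partial>next_hist p L (euler L) h)
       = ennreal (euler_potential p L e h)"
proof -
  define V where "V = search_value p L"
  have "0 < V" using L p by (simp add: V_def search_value_pos)
  have "1 + (\<integral>\<^sup>+h'. ennreal (euler_potential p L e h') \<partial>next_hist p L (euler L) h)
      = ennreal (1 + (V * (1 - p) * (1 - p) + (real L - 1) * (1 - p) + p * (real L - 1) / 2))"
    unfolding nn_integral_euler_potential_root[OF assms] V_def[symmetric]
    by (intro one_plus_ennreal add_nonneg_nonneg mult_nonneg_nonneg divide_nonneg_nonneg)
      (use \<open>0 < V\<close> p L in auto)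
  also have "1 + (V * (1 - p) * (1 - p) + (real L - 1) * (1 - p) + p * (real L - 1) / 2) = V"
    using search_value_fixed_point[OF p, of L] by (simp add: V_def)
  finally show ?thesis using root by (simp add: euler_potential_def V_def first_move_None_not_found)
qed

lemma search_time_euler_le:
  assumes L: "L \<ge> 2" and p: "0 < p" "p \<le> 1" and e: "e < L"
  shows "search_time p L (euler L) e \<le> ennreal (search_value p L)"
proof -
  have "search_time p L (euler L) e
      = (\<Sum>t. \<integral>\<^sup>+h. indicator {h. \<not> found e h} h \<partial>hist p L (euler L) t)"
    by (simp add: search_time_def measure_pmf.emeasure_eq_measure)
  also have "\<dots> \<le> ennreal (euler_potential p L e [])"
  proof (rule suminf_hist_le_potential[where I = "euler_invariant L e"])
    show "euler_invariant L e []" by (simp add: euler_invariant_def)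
    show "euler_invariant L e (h @ [(A, a)])"
      if "euler_invariant L e h" "a \<in> set_pmf (euler L h A)" for h A a
      using euler_invariant_append[OF L e that] .
    show "indicator {h. \<not> found e h} h
        + (\<integral>\<^sup>+h'. ennreal (euler_potential p L e h') \<partial>next_hist p L (euler L) h)
        \<le> ennreal (euler_potential p L e h)" if "euler_invariant L e h" for h
    proof (cases "found e h")
      case False
      then show ?thesis using euler_potential_step_root[OF L p e] euler_potential_step_tour[OF L p e that]
        by (cases "first_move h = None") simp_all
    qed (simp add: euler_potential_def)
  qed
  finally show ?thesis by (simp add: euler_potential_def)
qed

lemma saddle_point_values:
  fixes f :: "'s \<Rightarrow> 'h \<Rightarrow> 'a::complete_lattice"
  assumes "\<sigma>\<^sub>0 \<in> S" "q\<^sub>0 \<in> H"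
    and "\<And>\<sigma>. \<sigma> \<in> S \<Longrightarrow> V \<le> f \<sigma> q\<^sub>0" and "\<And>q. q \<in> H \<Longrightarrow> f \<sigma>\<^sub>0 q \<le> V"
  shows "(\<Squnion>q \<in> H. \<Sqinter>\<sigma> \<in> S. f \<sigma> q) = V" and "(\<Sqinter>\<sigma> \<in> S. \<Squnion>q \<in> H. f \<sigma> q) = V"
    and "(\<Sqinter>\<sigma> \<in> S. f \<sigma> q\<^sub>0) = V" and "(\<Squnion>q \<in> H. f \<sigma>\<^sub>0 q) = V"
proof -
  have "V \<le> (\<Sqinter>\<sigma> \<in> S. f \<sigma> q\<^sub>0)" by (rule INF_greatest) (rule assms(3))
  moreover have "(\<Sqinter>\<sigma> \<in> S. f \<sigma> q\<^sub>0) \<le> (\<Squnion>q \<in> H. \<Sqinter>\<sigma> \<in> S. f \<sigma> q)"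
    by (rule SUP_upper[OF assms(2)])
  moreover have "(\<Squnion>q \<in> H. \<Sqinter>\<sigma> \<in> S. f \<sigma> q) \<le> (\<Sqinter>\<sigma> \<in> S. \<Squnion>q \<in> H. f \<sigma> q)"
    by (intro SUP_least INF_mono) (auto intro: SUP_upper)
  moreover have "(\<Sqinter>\<sigma> \<in> S. \<Squnion>q \<in> H. f \<sigma> q) \<le> (\<Squnion>q \<in> H. f \<sigma>\<^sub>0 q)"
    by (rule INF_lower[OF assms(1)])
  moreover have "(\<Squnion>q \<in> H. f \<sigma>\<^sub>0 q) \<le> V" by (rule SUP_least) (rule assms(4))
  ultimately show "(\<Squnion>q \<in> H. \<Sqinter>\<sigma> \<in> S. f \<sigma> q) = V" "(\<Sqinter>\<sigma> \<in> S. \<Squnion>q \<in> H. f \<sigma> q) = V"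
    "(\<Sqinter>\<sigma> \<in> S. f \<sigma> q\<^sub>0) = V" "(\<Squnion>q \<in> H. f \<sigma>\<^sub>0 q) = V"
    by (meson order.trans order.antisym)+
qed

theorem mainTheorem17:
  fixes L :: nat and p :: real
  assumes "L \<ge> 2" and "0 < p" and "p \<le> 1"
  shows "lower_value p L = ennreal (1 / (1 - (1 - p)^2) + (real L - 1) / (2 * p))
       \<and> upper_value p L = ennreal (1 / (1 - (1 - p)^2) + (real L - 1) / (2 * p))
       \<and> hider_strategy L (pmf_of_set {..<L})
       \<and> (\<Sqinter>\<sigma> \<in> {\<sigma>. searcher_strategy L \<sigma>}. payoff p L \<sigma> (pmf_of_set {..<L}))
           = ennreal (1 / (1 - (1 - p)^2) + (real L - 1) / (2 * p))
       \<and> searcher_strategy L (euler L)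
       \<and> (\<Squnion>q \<in> {q. hider_strategy L q}. payoff p L (euler L) q)
           = ennreal (1 / (1 - (1 - p)^2) + (real L - 1) / (2 * p))"
proof -
  let ?S = "{\<sigma>. searcher_strategy L \<sigma>}" and ?H = "{q. hider_strategy L q}"
    and ?U = "pmf_of_set {..<L}" and ?V = "ennreal (search_value p L)"
  have euler: "euler L \<in> ?S" using searcher_strategy_euler[OF assms(1)] by simp
  have uniform: "?U \<in> ?H"
    using assms(1) by (auto simp: hider_strategy_def lessThan_empty_iff)
  have "?V \<le> payoff p L \<sigma> ?U" if "\<sigma> \<in> ?S" for \<sigma>
    using uniform_hider_payoff_ge[OF assms] that by simp
  moreover have "payoff p L (euler L) q \<le> ?V" if "q \<in> ?H" for q
  proof -
    have "payoff p L (euler L) q \<le> (\<integral>\<^sup>+e. ?V \<partial>q)"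
      unfolding payoff_def using that search_time_euler_le[OF assms]
      by (intro nn_integral_mono_AE) (auto simp: AE_measure_pmf_iff hider_strategy_def)
    then show ?thesis by simp
  qed
  ultimately show ?thesis
    unfolding lower_value_def upper_value_def search_value_def[symmetric]
    using saddle_point_values[of "euler L" ?S ?U ?H ?V "payoff p L", OF euler uniform] euler uniform
    by simp
qed

end
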